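(* For every $\varepsilon\in(0,1/64)$ there exists a family of MHR distributions supported on $[1,2]$ such that, with either the one-sample hint or the value-range hint, any pricing-query algorithm that for every distribution in the family outputs a price $\widehat p$ with $\mathrm{Rev}(\widehat p)\ge(1-\varepsilon)\max_p\mathrm{Rev}(p)$ with probability at least $2/15$ must perform $\Omega(\varepsilon^{-2})$ pricing queries.
   Context: Pricing query model: the buyer's value has unknown CDF $F(p)=\Pr[v<p]$; the algorithm adaptively posts prices $p_1,\dots,p_m$; at each query a fresh independent $v_t\sim F$ is drawn and only $\mathbf 1\{v_t\ge p_t\}$ is observed; finally it outputs a price. $q(p)=1-F(p)$, $\mathrm{Rev}(p)=p\,q(p)$. One-sample hint: before any queries the algorithm observes one realized value $v_0\sim F$ (and nothing else about $F$). Value-range hint: the algorithm knows the support of $F$ lies in $[1,H]$ (here $H=2$). A distribution with density $f$ is MHR if $f(v)/(1-F(v))$ is nondecreasing on its support. *)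

theory Defs
  imports "HOL-Probability.Probability"
begin

definition cdfF :: "real measure \<Rightarrow> real \<Rightarrow> real" where
  "cdfF M p = measure M {..<p}"

definition sellq :: "real measure \<Rightarrow> real \<Rightarrow> real" where
  "sellq M p = measure M {p..}"

definition Rev :: "real measure \<Rightarrow> real \<Rightarrow> real" where
  "Rev M p = p * sellq M p"

definition opt_rev :: "real measure \<Rightarrow> real" where
  "opt_rev M = (SUP p. Rev M p)"

definition MHR :: "real measure \<Rightarrow> bool" where
  "MHR M \<longleftrightarrow> (\<exists>f. f \<in> borel_measurable borel \<and> (\<forall>x. 0 \<le> f x) \<and>
      M = density lborel (\<lambda>x. ennreal (f x)) \<and>
      (\<forall>x y. x \<le> y \<and> 0 < f x \<and> cdfF M x < 1 \<and> 0 < f y \<and> cdfF M y < 1 \<longrightarrow>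
             f x / (1 - cdfF M x) \<le> f y / (1 - cdfF M y)))"

datatype hint = OneSample | ValueRange

text \<open>Distribution of the hint: one-sample hint = one draw from M; value-range hint carries no
  information beyond the (known) range, modelled as the constant 0.\<close>
definition hint_measure :: "hint \<Rightarrow> real measure \<Rightarrow> real measure" where
  "hint_measure h M = (case h of OneSample \<Rightarrow> M | ValueRange \<Rightarrow> return borel 0)"

text \<open>Probability that the adaptive price sequence P (given the previous answers) produces the
  answer sequence bs, when each query uses a fresh independent value drawn from M.\<close>
definition path_prob :: "real measure \<Rightarrow> (bool list \<Rightarrow> real) \<Rightarrow> bool list \<Rightarrow> real" where
  "path_prob M P bs = (\<Prod>t<length bs. if bs ! t then sellq M (P (take t bs)) else cdfF M (P (take t bs)))"

text \<open>Success probability of a randomized m-query algorithm: random seed r ~ R, hint x,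
  query prices P r x (previous answers), output price Out r x (all m answers).\<close>
definition succ_prob :: "real measure \<Rightarrow> hint \<Rightarrow> real \<Rightarrow> nat \<Rightarrow> real measure \<Rightarrow>
    (real \<Rightarrow> real \<Rightarrow> bool list \<Rightarrow> real) \<Rightarrow> (real \<Rightarrow> real \<Rightarrow> bool list \<Rightarrow> real) \<Rightarrow> real" where
  "succ_prob M h eps m R P Out =
     (LINT r|R. LINT x|hint_measure h M.
        (\<Sum>bs\<in>{bs::bool list. length bs = m}.
           path_prob M (P r x) bs *
           (if (1 - eps) * opt_rev M \<le> Rev M (Out r x bs) then 1 else 0)))"

end

theory Submission
  imports Defs
begin

text \<open>For \<open>eps < 1/2000\<close> take ten distributions with density \<open>1/4\<close> on \<open>[1, t\<^sub>j)\<close> and a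
  larger constant density on \<open>[t\<^sub>j, 2]\<close>, where \<open>t\<^sub>j = 3/2 + 4 j eps\<close>. Each revenue curve peaks
  sharply at \<open>t\<^sub>j\<close>, so the \<open>(1 - eps)\<close>-optimal prices of different members lie in disjoint
  intervals, while the answer probabilities of every member are within \<open>\<chi>\<^sup>2\<close>-distance
  \<open>O(eps\<^sup>2)\<close> of those for \<open>t = 3/2\<close>. The \<open>\<chi>\<^sup>2\<close>-divergence of the answer sequences of an
  adaptive algorithm grows at most like \<open>(1 + O(eps\<^sup>2))\<^sup>m\<close>, so by a change of measure towards
  the reference distribution the ten success probabilities sum to little more than \<open>1\<close> unless
  \<open>m eps\<^sup>2\<close> is bounded below. Averaging over a one-sample hint multiplies this bound at most by
  \<open>1.03\<close>, the mass of a common upper bound of the ten densities, and the result stays below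
  \<open>10 \<cdot> 2/15\<close>. For larger \<open>eps\<close> it suffices that zero queries fail: sixteen uniform
  distributions have disjoint near-optimal price intervals and densities dominated by a function
  of mass below \<open>16 \<cdot> 2/15\<close>.\<close>

lemma cdfF_eq_1_minus_sellq:
  assumes "prob_space M" "sets M = sets borel"
  shows "cdfF M p = 1 - sellq M p"
proof -
  interpret prob_space M by fact
  have "{..<p} = space M - {p..}"
    using sets_eq_imp_space_eq[OF assms(2)] by auto
  then show ?thesis
    unfolding cdfF_def sellq_def using prob_compl[of "{p..}"] assms(2) by simp
qed

lemma sellq_antimono:
  assumes "finite_measure M" "sets M = sets borel" "p \<le> p'"
  shows "sellq M p' \<le> sellq M p"
proof -
  interpret finite_measure M by fact
  show ?thesis unfolding sellq_def using assms by (intro finite_measure_mono) auto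
qed

lemma cdfF_mono:
  assumes "finite_measure M" "sets M = sets borel" "p \<le> p'"
  shows "cdfF M p \<le> cdfF M p'"
proof -
  interpret finite_measure M by fact
  show ?thesis unfolding cdfF_def using assms by (intro finite_measure_mono) auto
qed

lemma borel_measurable_cdfF:
  assumes "finite_measure M" "sets M = sets borel"
  shows "cdfF M \<in> borel_measurable borel"
  by (rule borel_measurable_mono) (auto simp: mono_def intro: cdfF_mono[OF assms])

lemma borel_measurable_sellq:
  assumes "finite_measure M" "sets M = sets borel"
  shows "sellq M \<in> borel_measurable borel"
proof -
  have "(\<lambda>p. - sellq M p) \<in> borel_measurable borel"
    by (rule borel_measurable_mono) (auto simp: mono_def intro: sellq_antimono[OF assms])
  then show ?thesis
    using borel_measurable_uminus_eq by blast
qed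

lemma borel_measurable_Rev:
  assumes "finite_measure M" "sets M = sets borel"
  shows "Rev M \<in> borel_measurable borel"
  using borel_measurable_sellq[OF assms] unfolding Rev_def[abs_def] by measurable

section \<open>Piecewise constant densities\<close>

definition step_density :: "real \<Rightarrow> real \<Rightarrow> real \<Rightarrow> real \<Rightarrow> real \<Rightarrow> real" where
  "step_density a d t e x = a * indicator {1..<t} x + d * indicator {t..e} x"

definition step_dist :: "real \<Rightarrow> real \<Rightarrow> real \<Rightarrow> real \<Rightarrow> real measure" where
  "step_dist a d t e = density lborel (\<lambda>x. ennreal (step_density a d t e x))"

definition step_tail :: "real \<Rightarrow> real \<Rightarrow> real \<Rightarrow> real \<Rightarrow> real \<Rightarrow> real" where
  "step_tail a d t e p = a * max 0 (t - max 1 p) + d * max 0 (e - max t p)"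

lemma borel_measurable_step_density[measurable]: "step_density a d t e \<in> borel_measurable borel"
  unfolding step_density_def by measurable

lemma step_density_nonneg: "0 \<le> a \<Longrightarrow> 0 \<le> d \<Longrightarrow> 0 \<le> step_density a d t e x"
  unfolding step_density_def by (auto simp: indicator_def)

lemma step_density_le:
  assumes "0 \<le> a" "a \<le> D" "0 \<le> d" "d \<le> D" "T \<le> t" "t \<le> E" "e \<le> E"
  shows "step_density a d t e x \<le> step_density a D T E x"
  using assms unfolding step_density_def indicator_def by auto

lemma emeasure_lborel_Ico_ennreal: "emeasure lborel {l..<u::real} = ennreal (u - l)"
  by (cases "l \<le> u") (auto simp: ennreal_neg)

lemma emeasure_lborel_Icc_ennreal: "emeasure lborel {l..u::real} = ennreal (u - l)"
  by (cases "l \<le> u") (auto simp: ennreal_neg)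

lemma integrable_step_density: "integrable lborel (step_density a d t e)"
proof -
  have "integrable lborel (\<lambda>x. a * indicator {1..<t} x + d * indicator {t..e} x :: real)"
    by (intro Bochner_Integration.integrable_add integrable_mult_right integrable_real_indicator)
       (auto simp: emeasure_lborel_Ico_ennreal emeasure_lborel_Icc_ennreal)
  then show ?thesis unfolding step_density_def[abs_def] .
qed

lemma integral_step_density:
  assumes "1 \<le> t" "t \<le> e"
  shows "integral\<^sup>L lborel (step_density a d t e) = a * (t - 1) + d * (e - t)"
  using assms unfolding step_density_def
  by (subst Bochner_Integration.integral_add)
     (auto intro!: integrable_real_indicator
       simp: emeasure_lborel_Ico_ennreal emeasure_lborel_Icc_ennreal)

lemma sets_step_dist[simp]: "sets (step_dist a d t e) = sets borel"
  unfolding step_dist_def by simp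

lemma space_step_dist[simp]: "space (step_dist a d t e) = UNIV"
  unfolding step_dist_def by simp

lemma emeasure_step_dist:
  assumes "0 \<le> a" "0 \<le> d" "A \<in> sets borel"
  shows "emeasure (step_dist a d t e) A =
    ennreal a * emeasure lborel ({1..<t} \<inter> A) + ennreal d * emeasure lborel ({t..e} \<inter> A)"
proof -
  have "emeasure (step_dist a d t e) A =
      (\<integral>\<^sup>+x. ennreal (step_density a d t e x) * indicator A x \<partial>lborel)"
    unfolding step_dist_def using assms by (simp add: emeasure_density)
  also have "\<dots> = (\<integral>\<^sup>+x. ennreal a * indicator ({1..<t} \<inter> A) x
      + ennreal d * indicator ({t..e} \<inter> A) x \<partial>lborel)"
    using assms by (intro nn_integral_cong) (auto simp: step_density_def indicator_def)
  also have "\<dots> =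
      ennreal a * emeasure lborel ({1..<t} \<inter> A) + ennreal d * emeasure lborel ({t..e} \<inter> A)"
    using assms by (simp add: nn_integral_add nn_integral_cmult)
  finally show ?thesis .
qed

lemma emeasure_step_dist_interval:
  assumes "0 \<le> a" "0 \<le> d" "1 \<le> t" "t \<le> e" "{1..e} \<subseteq> A" "A \<in> sets borel"
  shows "emeasure (step_dist a d t e) A = ennreal (a * (t - 1) + d * (e - t))"
proof -
  have "{1..<t} \<inter> A = {1..<t}" "{t..e} \<inter> A = {t..e}" using assms by auto
  then show ?thesis
    using assms
    by (simp add: emeasure_step_dist emeasure_lborel_Ico_ennreal emeasure_lborel_Icc_ennreal
        ennreal_plus ennreal_mult)
qed

lemma step_tail_nonneg: "0 \<le> a \<Longrightarrow> 0 \<le> d \<Longrightarrow> 0 \<le> step_tail a d t e p"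
  unfolding step_tail_def by simp

lemma sellq_step_dist:
  assumes "0 \<le> a" "0 \<le> d"
  shows "sellq (step_dist a d t e) p = step_tail a d t e p"
proof -
  have "{1..<t} \<inter> {p..} = {max 1 p..<t}" "{t..e} \<inter> {p..} = {max t p..e}" by auto
  then have "emeasure (step_dist a d t e) {p..} =
      ennreal a * ennreal (max 0 (t - max 1 p)) + ennreal d * ennreal (max 0 (e - max t p))"
    using assms
    by (simp add: emeasure_step_dist emeasure_lborel_Ico_ennreal emeasure_lborel_Icc_ennreal
        ennreal_max_0)
  also have "\<dots> = ennreal (step_tail a d t e p)"
    using assms by (simp add: step_tail_def ennreal_plus ennreal_mult)
  finally show ?thesis
    using assms unfolding sellq_def measure_def by (simp add: step_tail_nonneg)
qed

locale step_distribution =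
  fixes a d t e :: real
  assumes a_nonneg: "0 \<le> a" and a_le_d: "a \<le> d" and one_le_t: "1 \<le> t" and t_less_e: "t < e"
    and total_mass: "a * (t - 1) + d * (e - t) = 1"
begin

lemma d_nonneg: "0 \<le> d"
  using a_nonneg a_le_d by linarith

lemma prob_space: "prob_space (step_dist a d t e)"
  using emeasure_step_dist_interval[OF a_nonneg d_nonneg one_le_t less_imp_le[OF t_less_e], of UNIV]
  by (intro prob_spaceI) (simp add: total_mass)

lemma measure_1_2: "e \<le> 2 \<Longrightarrow> measure (step_dist a d t e) {1..2} = 1"
  using emeasure_step_dist_interval[OF a_nonneg d_nonneg one_le_t less_imp_le[OF t_less_e], of "{1..2}"]
  by (simp add: measure_def total_mass)

lemma sellq: "sellq (step_dist a d t e) p = step_tail a d t e p"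
  by (rule sellq_step_dist[OF a_nonneg d_nonneg])

lemma cdfF: "cdfF (step_dist a d t e) p = 1 - step_tail a d t e p"
  using cdfF_eq_1_minus_sellq[OF prob_space sets_step_dist] sellq by simp

lemma tail_bounds: "0 \<le> step_tail a d t e p \<and> step_tail a d t e p \<le> 1"
proof -
  interpret prob_space "step_dist a d t e" by (rule prob_space)
  show ?thesis unfolding sellq[symmetric] sellq_def by simp
qed

lemma tail_below:
  assumes "p \<le> 1"
  shows "step_tail a d t e p = 1"
proof -
  have "max 1 p = 1" "max t p = t" using assms one_le_t by auto
  then show ?thesis using total_mass one_le_t t_less_e unfolding step_tail_def by simp
qed

lemma tail_low: "1 \<le> p \<Longrightarrow> p \<le> t \<Longrightarrow> step_tail a d t e p = 1 - a * (p - 1)"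
  using total_mass t_less_e unfolding step_tail_def by (simp add: max_def algebra_simps)

lemma tail_high: "t \<le> p \<Longrightarrow> p \<le> e \<Longrightarrow> step_tail a d t e p = d * (e - p)"
  using one_le_t unfolding step_tail_def by (simp add: max_def)

lemma tail_above: "e \<le> p \<Longrightarrow> step_tail a d t e p = 0"
  using one_le_t t_less_e unfolding step_tail_def by (simp add: max_def)

lemma support_of_hazard:
  assumes "0 < step_density a d t e y" "0 < step_tail a d t e y"
  shows "1 \<le> y" "y < e" "0 < d"
proof -
  have "1 \<le> y \<and> y \<le> e"
  proof (rule ccontr)
    assume "\<not> (1 \<le> y \<and> y \<le> e)"
    then have "step_density a d t e y = 0"
      using one_le_t t_less_e by (auto simp: step_density_def indicator_def)
    then show False
      using assms(1) by simp
  qed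
  moreover have "step_density a d t e y \<le> d"
    using a_le_d d_nonneg by (auto simp: step_density_def indicator_def)
  ultimately show "1 \<le> y" "y < e" "0 < d"
    using assms tail_above[of y] by (auto simp: not_le[symmetric])
qed

lemma hazard_low:
  "1 \<le> x \<Longrightarrow> x < t \<Longrightarrow> step_density a d t e x / step_tail a d t e x = a / (1 - a * (x - 1))"
  using tail_low[of x] by (simp add: step_density_def)

lemma hazard_high:
  "t \<le> x \<Longrightarrow> x < e \<Longrightarrow> 0 < d \<Longrightarrow> step_density a d t e x / step_tail a d t e x = 1 / (e - x)"
  using tail_high[of x] one_le_t by (simp add: step_density_def)

lemma hazard_rate_mono:
  assumes "x \<le> y" "0 < step_density a d t e y" "0 < step_tail a d t e y"
  shows "step_density a d t e x / step_tail a d t e x \<le> step_density a d t e y / step_tail a d t e y"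
proof -
  note y = support_of_hazard[OF assms(2,3)]
  consider "x < 1" | "1 \<le> x" "x < t" "y < t" | "1 \<le> x" "x < t" "t \<le> y" | "t \<le> x"
    by linarith
  then show ?thesis
  proof cases
    case 1
    then have "step_density a d t e x = 0"
      using one_le_t by (simp add: step_density_def indicator_def)
    then show ?thesis
      using assms by simp
  next
    case 2
    have "a * (x - 1) \<le> a * (y - 1)"
      using a_nonneg assms(1) by (simp add: mult_left_mono)
    moreover have "0 < 1 - a * (y - 1)"
      using 2 assms tail_low[of y] by simp
    ultimately show ?thesis
      using 2 y a_nonneg assms(1) by (simp add: hazard_low frac_le)
  next
    case 3
    have "a * (e - y) \<le> d * (e - t)"
      using 3 y a_nonneg a_le_d by (intro mult_mono) auto
    moreover have "d * (e - t) \<le> 1 - a * (x - 1)"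
      using 3 total_mass mult_left_mono[OF _ a_nonneg, of "x - 1" "t - 1"] by linarith
    moreover have "0 < d * (e - t)"
      using y t_less_e by simp
    ultimately have "a / (1 - a * (x - 1)) \<le> 1 / (e - y)"
      using y by (simp add: divide_simps)
    then show ?thesis
      using 3 y by (simp add: hazard_low hazard_high)
  next
    case 4
    then show ?thesis
      using assms(1) y by (simp add: hazard_high frac_le)
  qed
qed

lemma MHR: "MHR (step_dist a d t e)"
  unfolding MHR_def cdfF
  using step_density_nonneg[OF a_nonneg d_nonneg] hazard_rate_mono
  by (intro exI[of _ "step_density a d t e"]) (auto simp: step_dist_def)

lemma Rev_eq: "Rev (step_dist a d t e) p = p * step_tail a d t e p"
  unfolding Rev_def sellq ..

lemma Rev_le: "Rev (step_dist a d t e) p \<le> e"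
proof (cases "0 \<le> p \<and> p < e")
  case True
  then show ?thesis
    unfolding Rev_eq using tail_bounds[of p] mult_mono[of p e "step_tail a d t e p" 1] by simp
next
  case False
  then have "p * step_tail a d t e p \<le> 0"
    using tail_above[of p] tail_bounds[of p] by (auto simp: mult_nonpos_nonneg)
  then show ?thesis
    unfolding Rev_eq using one_le_t t_less_e by linarith
qed

lemma Rev_le_opt_rev: "Rev (step_dist a d t e) p \<le> opt_rev (step_dist a d t e)"
  unfolding opt_rev_def by (rule cSUP_upper) (auto intro: bdd_aboveI[where M=e] Rev_le)

lemma near_optimal_price:
  assumes "eps \<le> 1" "(1 - eps) * opt_rev (step_dist a d t e) \<le> Rev (step_dist a d t e) p"
  shows "(1 - eps) * (s * step_tail a d t e s) \<le> p * step_tail a d t e p"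
  using assms mult_left_mono[OF Rev_le_opt_rev[of s], of "1 - eps"] unfolding Rev_eq by simp

end

definition MHR_family_on_1_2 :: "real measure set \<Rightarrow> bool" where
  "MHR_family_on_1_2 Fam \<longleftrightarrow> Fam \<noteq> {} \<and>
     (\<forall>M\<in>Fam. prob_space M \<and> sets M = sets borel \<and> MHR M \<and> measure M {1..2} = 1)"

lemma MHR_family_on_1_2_step_dists:
  assumes "0 < K" "\<And>j. j < K \<Longrightarrow> step_distribution (a j) (d j) (t j) (e j) \<and> e j \<le> 2"
  shows "MHR_family_on_1_2 ((\<lambda>j. step_dist (a j) (d j) (t j) (e j)) ` {..<K})"
  unfolding MHR_family_on_1_2_def
  using assms step_distribution.prob_space step_distribution.MHR step_distribution.measure_1_2
  by fastforce

section \<open>Adaptive queries and \<open>\<chi>\<^sup>2\<close>-divergence\<close>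

definition answer_factor :: "(real \<Rightarrow> real) \<Rightarrow> bool \<Rightarrow> real \<Rightarrow> real" where
  "answer_factor q c p = (if c then q p else 1 - q p)"

definition answer_prob :: "(real \<Rightarrow> real) \<Rightarrow> (bool list \<Rightarrow> real) \<Rightarrow> bool list \<Rightarrow> real" where
  "answer_prob q P bs = (\<Prod>i<length bs. answer_factor q (bs ! i) (P (take i bs)))"

definition chi2_bernoulli :: "real \<Rightarrow> real \<Rightarrow> real" where
  "chi2_bernoulli x y = x\<^sup>2 / y + (1 - x)\<^sup>2 / (1 - y) - 1"

text \<open>The support conditions are needed since \<open>x / 0 = 0\<close> would otherwise hide an
  infinite divergence where \<open>b p \<in> {0, 1}\<close>.\<close>
definition chi2_close :: "(real \<Rightarrow> real) \<Rightarrow> (real \<Rightarrow> real) \<Rightarrow> real \<Rightarrow> bool" where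
  "chi2_close a b chi \<longleftrightarrow> (\<forall>p. 0 \<le> a p \<and> a p \<le> 1 \<and> 0 \<le> b p \<and> b p \<le> 1 \<and>
     (b p = 0 \<longrightarrow> a p = 0) \<and> (b p = 1 \<longrightarrow> a p = 1) \<and> chi2_bernoulli (a p) (b p) \<le> chi)"

lemma chi2_bernoulli_self: "chi2_bernoulli x x = 0"
  unfolding chi2_bernoulli_def by (simp add: power2_eq_square)

lemma chi2_bernoulli_eq: "0 < y \<Longrightarrow> y < 1 \<Longrightarrow> chi2_bernoulli x y = (x - y)\<^sup>2 / (y * (1 - y))"
  unfolding chi2_bernoulli_def by (simp add: field_simps power2_eq_square)

lemma answer_prob_Nil[simp]: "answer_prob q P [] = 1"
  unfolding answer_prob_def by simp

lemma answer_prob_Cons: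
  "answer_prob q P (c # bs) = answer_factor q c (P []) * answer_prob q (\<lambda>l. P (c # l)) bs"
  unfolding answer_prob_def length_Cons prod.lessThan_Suc_shift by simp

lemma answer_prob_nonneg:
  assumes "\<And>p. 0 \<le> q p \<and> q p \<le> 1"
  shows "0 \<le> answer_prob q P bs"
  unfolding answer_prob_def answer_factor_def using assms by (intro prod_nonneg) (simp add: le_diff_eq)

lemma path_prob_eq_answer_prob:
  assumes "prob_space M" "sets M = sets borel"
  shows "path_prob M P bs = answer_prob (sellq M) P bs"
  unfolding path_prob_def answer_prob_def answer_factor_def cdfF_eq_1_minus_sellq[OF assms] ..

lemma finite_bool_lists_length: "finite {bs :: bool list. length bs = m}"
  using finite_lists_length_eq[of "UNIV :: bool set" m] by simp

lemma bool_lists_length_0: "{bs :: bool list. length bs = 0} = {[]}"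
  by auto

lemma sum_bool_lists_Suc:
  fixes F :: "bool list \<Rightarrow> real"
  shows "(\<Sum>bs | length bs = Suc m. F bs) =
    (\<Sum>bs | length bs = m. F (True # bs)) + (\<Sum>bs | length bs = m. F (False # bs))"
proof -
  let ?S = "{bs :: bool list. length bs = m}"
  have "{bs. length bs = Suc m} = Cons True ` ?S \<union> Cons False ` ?S"
    by (auto simp: length_Suc_conv image_iff)
  then have "(\<Sum>bs | length bs = Suc m. F bs) =
      (\<Sum>bs\<in>Cons True ` ?S. F bs) + (\<Sum>bs\<in>Cons False ` ?S. F bs)"
    by (auto intro: sum.union_disjoint finite_bool_lists_length)
  then show ?thesis
    by (simp add: sum.reindex)
qed

lemma sum_answer_prob: "(\<Sum>bs | length bs = m. answer_prob q P bs) = 1"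
proof (induction m arbitrary: P)
  case 0
  then show ?case by (simp add: bool_lists_length_0)
next
  case (Suc m)
  then show ?case
    by (simp add: sum_bool_lists_Suc answer_prob_Cons answer_factor_def flip: sum_distrib_left)
qed

lemma answer_prob_eq_0_transfer:
  assumes "\<And>p. b p = 0 \<Longrightarrow> a p = 0" "\<And>p. b p = 1 \<Longrightarrow> a p = 1" "answer_prob b P bs = 0"
  shows "answer_prob a P bs = 0"
proof -
  obtain i where "i < length bs" "answer_factor b (bs ! i) (P (take i bs)) = 0"
    using assms(3) unfolding answer_prob_def by auto
  then have "answer_factor a (bs ! i) (P (take i bs)) = 0"
    using assms(1,2) unfolding answer_factor_def by (auto split: if_splits)
  then show ?thesis
    using \<open>i < length bs\<close> unfolding answer_prob_def by auto
qed

lemma sum_answer_prob_chi2_le: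
  assumes "chi2_close a b chi" "0 \<le> chi"
  shows "(\<Sum>bs | length bs = m. (answer_prob a P bs)\<^sup>2 / answer_prob b P bs) \<le> (1 + chi) ^ m"
proof (induction m arbitrary: P)
  case 0
  then show ?case by (simp add: bool_lists_length_0)
next
  case (Suc m)
  define u where "u c = (answer_factor a c (P []))\<^sup>2 / answer_factor b c (P [])" for c
  have u_nonneg: "0 \<le> u c" for c
    using assms(1) unfolding u_def answer_factor_def chi2_close_def by auto
  have u_sum: "u True + u False \<le> 1 + chi"
    using assms(1) unfolding u_def answer_factor_def chi2_close_def chi2_bernoulli_def
    by (auto simp: algebra_simps)
  let ?ratio = "\<lambda>Q. \<Sum>bs | length bs = m. (answer_prob a Q bs)\<^sup>2 / answer_prob b Q bs"
  have "(\<Sum>bs | length bs = Suc m. (answer_prob a P bs)\<^sup>2 / answer_prob b P bs)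
     = u True * ?ratio (\<lambda>l. P (True # l)) + u False * ?ratio (\<lambda>l. P (False # l))"
    unfolding sum_bool_lists_Suc answer_prob_Cons sum_distrib_left
    by (simp add: u_def power_mult_distrib)
  also have "\<dots> \<le> (u True + u False) * (1 + chi) ^ m"
    using Suc.IH u_nonneg by (simp add: distrib_right add_mono mult_left_mono)
  also have "\<dots> \<le> (1 + chi) ^ Suc m"
    using u_sum assms(2) by (simp add: mult_right_mono)
  finally show ?case .
qed

lemma mult_le_chi2_term:
  fixes x y g l :: real
  assumes "0 \<le> x" "0 \<le> y" "y = 0 \<Longrightarrow> x = 0" "0 \<le> g" "g \<le> 1" "0 < l"
  shows "x * g \<le> y * g + (x\<^sup>2 / y - 2 * x + y) / (2 * l) + l * y / 2"
proof (cases "y = 0")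
  case True
  then show ?thesis using assms by simp
next
  case False
  then have "0 < y" using assms(2) by simp
  have chi2_term: "(x\<^sup>2 / y - 2 * x + y) / (2 * l) = \<bar>x - y\<bar>\<^sup>2 / (2 * l * y)"
    using \<open>0 < y\<close> assms(6) by (simp add: field_simps power2_eq_square)
  \<comment> \<open>AM-GM\<close>
  have "\<bar>x - y\<bar>\<^sup>2 / (2 * l * y) + l * y / 2 - \<bar>x - y\<bar> = (\<bar>x - y\<bar> - l * y)\<^sup>2 / (2 * l * y)"
    using \<open>0 < y\<close> assms(6) by (simp add: field_simps power2_eq_square)
  moreover have "0 \<le> (\<bar>x - y\<bar> - l * y)\<^sup>2 / (2 * l * y)"
    using \<open>0 < y\<close> assms(6) by simp
  ultimately have "\<bar>x - y\<bar> \<le> \<bar>x - y\<bar>\<^sup>2 / (2 * l * y) + l * y / 2"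
    by linarith
  moreover have "(x - y) * g \<le> \<bar>x - y\<bar> * g"
    using assms(4) by (simp add: mult_right_mono)
  moreover have "\<bar>x - y\<bar> * g \<le> \<bar>x - y\<bar>"
    using assms(4,5) by (simp add: mult_left_le)
  ultimately show ?thesis
    unfolding chi2_term by (simp add: algebra_simps)
qed

lemma answer_prob_change_of_measure:
  assumes "chi2_close a b chi" "0 \<le> chi" "\<And>bs. 0 \<le> g bs \<and> g bs \<le> 1" "0 < l"
  shows "(\<Sum>bs | length bs = m. answer_prob a P bs * g bs)
    \<le> (\<Sum>bs | length bs = m. answer_prob b P bs * g bs) + (((1 + chi) ^ m - 1) / (2 * l) + l / 2)"
proof -
  let ?S = "{bs :: bool list. length bs = m}" and ?A = "answer_prob a P" and ?B = "answer_prob b P"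
  have a01: "\<And>p. 0 \<le> a p \<and> a p \<le> 1" and b01: "\<And>p. 0 \<le> b p \<and> b p \<le> 1"
    and abs_cont: "\<And>p. b p = 0 \<Longrightarrow> a p = 0" "\<And>p. b p = 1 \<Longrightarrow> a p = 1"
    using assms(1) unfolding chi2_close_def by auto
  have "(\<Sum>bs\<in>?S. ?A bs * g bs)
      \<le> (\<Sum>bs\<in>?S. ?B bs * g bs + ((?A bs)\<^sup>2 / ?B bs - 2 * ?A bs + ?B bs) / (2 * l) + l * ?B bs / 2)"
    using answer_prob_nonneg[OF a01] answer_prob_nonneg[OF b01] answer_prob_eq_0_transfer[OF abs_cont]
      assms(3,4) by (intro sum_mono mult_le_chi2_term) auto
  also have "\<dots> = (\<Sum>bs\<in>?S. ?B bs * g bs)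
      + ((\<Sum>bs\<in>?S. (?A bs)\<^sup>2 / ?B bs) - 2 * (\<Sum>bs\<in>?S. ?A bs) + (\<Sum>bs\<in>?S. ?B bs)) / (2 * l)
      + l * (\<Sum>bs\<in>?S. ?B bs) / 2"
    by (simp add: sum.distrib sum_subtractf sum_distrib_left flip: sum_divide_distrib)
  also have "\<dots> = (\<Sum>bs\<in>?S. ?B bs * g bs) + ((\<Sum>bs\<in>?S. (?A bs)\<^sup>2 / ?B bs) - 1) / (2 * l) + l / 2"
    by (simp add: sum_answer_prob)
  also have "\<dots> \<le> (\<Sum>bs\<in>?S. ?B bs * g bs) + (((1 + chi) ^ m - 1) / (2 * l) + l / 2)"
    using sum_answer_prob_chi2_le[OF assms(1,2)] assms(4) by (simp add: divide_right_mono)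
  finally show ?thesis .
qed

lemma sum_answer_prob_disjoint_success_le:
  fixes a :: "nat \<Rightarrow> real \<Rightarrow> real" and g :: "nat \<Rightarrow> bool list \<Rightarrow> real"
  assumes "\<And>j. j < K \<Longrightarrow> chi2_close (a j) b chi" "0 \<le> chi" "0 < l"
    and "\<And>j bs. 0 \<le> g j bs \<and> g j bs \<le> 1" "\<And>bs. (\<Sum>j<K. g j bs) \<le> 1"
    and "\<And>p. 0 \<le> b p \<and> b p \<le> 1"
  shows "(\<Sum>j<K. \<Sum>bs | length bs = m. answer_prob (a j) P bs * g j bs)
    \<le> 1 + K * (((1 + chi) ^ m - 1) / (2 * l) + l / 2)"
proof -
  let ?S = "{bs :: bool list. length bs = m}" and ?err = "((1 + chi) ^ m - 1) / (2 * l) + l / 2"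
  have "(\<Sum>j<K. \<Sum>bs\<in>?S. answer_prob (a j) P bs * g j bs)
      \<le> (\<Sum>j<K. (\<Sum>bs\<in>?S. answer_prob b P bs * g j bs) + ?err)"
    using assms(1-4) by (intro sum_mono answer_prob_change_of_measure) auto
  also have "\<dots> = (\<Sum>bs\<in>?S. answer_prob b P bs * (\<Sum>j<K. g j bs)) + K * ?err"
    by (simp add: sum.distrib sum_distrib_left sum.swap[of _ "{..<K}"])
  also have "(\<Sum>bs\<in>?S. answer_prob b P bs * (\<Sum>j<K. g j bs)) \<le> (\<Sum>bs\<in>?S. answer_prob b P bs)"
    using assms(5,6) answer_prob_nonneg by (intro sum_mono mult_left_le) blast+
  finally show ?thesis
    by (simp add: sum_answer_prob)
qed

definition randomized_algorithm ::
    "real measure \<Rightarrow> (real \<Rightarrow> real \<Rightarrow> bool list \<Rightarrow> real) \<Rightarrow> (real \<Rightarrow> real \<Rightarrow> bool list \<Rightarrow> real) \<Rightarrow> bool" where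
  "randomized_algorithm R P Out \<longleftrightarrow> prob_space R \<and> sets R = sets borel \<and>
     (\<forall>bs. (\<lambda>(r, x). P r x bs) \<in> borel_measurable (borel \<Otimes>\<^sub>M borel)) \<and>
     (\<forall>bs. (\<lambda>(r, x). Out r x bs) \<in> borel_measurable (borel \<Otimes>\<^sub>M borel))"

definition succ_prob_given ::
    "real measure \<Rightarrow> real \<Rightarrow> nat \<Rightarrow> (bool list \<Rightarrow> real) \<Rightarrow> (bool list \<Rightarrow> real) \<Rightarrow> real" where
  "succ_prob_given M eps m Pq Oq = (\<Sum>bs | length bs = m.
     path_prob M Pq bs * (if (1 - eps) * opt_rev M \<le> Rev M (Oq bs) then 1 else 0))"

lemma succ_prob_eq_integral_given:
  "succ_prob M h eps m R P Out =
    (LINT r|R. LINT x|hint_measure h M. succ_prob_given M eps m (P r x) (Out r x))"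
  unfolding succ_prob_def succ_prob_given_def ..

lemma succ_prob_given_nonneg: "0 \<le> succ_prob_given M eps m Pq Oq"
  unfolding succ_prob_given_def path_prob_def sellq_def cdfF_def
  by (intro sum_nonneg mult_nonneg_nonneg prod_nonneg) auto

lemma borel_measurable_succ_prob_given:
  assumes "finite_measure M" "sets M = sets borel"
    and [measurable]: "\<And>bs. (\<lambda>x. P x bs) \<in> borel_measurable borel"
      "\<And>bs. (\<lambda>x. Out x bs) \<in> borel_measurable borel"
  shows "(\<lambda>x. succ_prob_given M eps m (P x) (Out x)) \<in> borel_measurable borel"
proof -
  note [measurable] = borel_measurable_sellq[OF assms(1,2)] borel_measurable_cdfF[OF assms(1,2)]
    borel_measurable_Rev[OF assms(1,2)]
  show ?thesis unfolding succ_prob_given_def path_prob_def by measurable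
qed

lemma randomized_algorithm_measurable_section:
  assumes "randomized_algorithm R P Out"
  shows "(\<lambda>x. P r x bs) \<in> borel_measurable borel" "(\<lambda>x. Out r x bs) \<in> borel_measurable borel"
  using assms measurable_Pair2'[of r borel borel]
  unfolding randomized_algorithm_def by (auto dest!: spec[of _ bs] intro: measurable_compose)

lemma integrable_mult_bounded:
  fixes h G :: "real \<Rightarrow> real"
  assumes "integrable lborel D" "h \<in> borel_measurable borel" "\<And>x. 0 \<le> h x \<and> h x \<le> D x"
    and "G \<in> borel_measurable borel" "\<And>x. 0 \<le> G x \<and> G x \<le> B"
  shows "integrable lborel (\<lambda>x. h x * G x)"
proof (rule Bochner_Integration.integrable_bound[where f="\<lambda>x. B * D x"])
  show "integrable lborel (\<lambda>x. B * D x)"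
    using assms(1) by simp
  show "(\<lambda>x. h x * G x) \<in> borel_measurable lborel"
    using assms(2,4) by measurable
  show "AE x in lborel. norm (h x * G x) \<le> norm (B * D x)"
  proof (intro AE_I2)
    fix x
    have "h x * G x \<le> D x * B"
      using assms(3,5)[of x] by (intro mult_mono) auto
    then show "norm (h x * G x) \<le> norm (B * D x)"
      using assms(3,5)[of x] by (simp add: abs_mult mult.commute[of B])
  qed
qed

lemma sum_density_integral_le:
  fixes f G :: "nat \<Rightarrow> real \<Rightarrow> real"
  assumes [measurable]: "\<And>j. j < K \<Longrightarrow> f j \<in> borel_measurable borel"
    and f: "\<And>j x. j < K \<Longrightarrow> 0 \<le> f j x \<and> f j x \<le> D x"
    and D: "integrable lborel D" "\<And>x. 0 \<le> D x" "integral\<^sup>L lborel D \<le> Z"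
    and [measurable]: "\<And>j. j < K \<Longrightarrow> G j \<in> borel_measurable borel"
    and G: "\<And>j x. 0 \<le> G j x" "\<And>x. (\<Sum>j<K. G j x) \<le> B"
  shows "(\<Sum>j<K. LINT x|density lborel (\<lambda>x. ennreal (f j x)). G j x) \<le> Z * B"
proof -
  have B_nonneg: "0 \<le> B"
    by (rule order_trans[OF sum_nonneg G(2)]) (rule G(1))
  have G_le: "G j x \<le> B" if "j < K" for j x
    by (rule order_trans[OF member_le_sum G(2)]) (use that G(1) in auto)
  have [measurable]: "D \<in> borel_measurable borel"
    using D(1) by (simp add: borel_measurable_integrable)
  have integrable: "integrable lborel (\<lambda>x. h x * G j x)"
    if "j < K" "h \<in> borel_measurable borel" "\<And>x. 0 \<le> h x \<and> h x \<le> D x" for h j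
    using that G(1) G_le[OF that(1)] by (intro integrable_mult_bounded[OF D(1)]) auto
  have "(\<Sum>j<K. LINT x|density lborel (\<lambda>x. ennreal (f j x)). G j x) =
      (\<Sum>j<K. LINT x|lborel. f j x * G j x)"
    using f by (intro sum.cong refl) (simp add: integral_density)
  also have "\<dots> \<le> (\<Sum>j<K. LINT x|lborel. D x * G j x)"
  proof (intro sum_mono integral_mono)
    fix j x assume "j \<in> {..<K}"
    then show "integrable lborel (\<lambda>x. f j x * G j x)" "integrable lborel (\<lambda>x. D x * G j x)"
      "f j x * G j x \<le> D x * G j x"
      using f G(1) D(2) by (auto intro!: integrable mult_right_mono)
  qed
  also have "\<dots> = (LINT x|lborel. D x * (\<Sum>j<K. G j x))"
    using integrable D(2) by (simp add: sum_distrib_left)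
  also have "\<dots> \<le> (LINT x|lborel. D x * B)"
  proof (rule integral_mono)
    show "integrable lborel (\<lambda>x. D x * (\<Sum>j<K. G j x))"
      unfolding sum_distrib_left using integrable D(2) by auto
    show "integrable lborel (\<lambda>x. D x * B)"
      using D(1) by simp
    show "D x * (\<Sum>j<K. G j x) \<le> D x * B" for x
      using D(2)[of x] G(2)[of x] by (rule mult_left_mono[rotated])
  qed
  also have "\<dots> \<le> Z * B"
    using D(3) B_nonneg by (simp add: mult_right_mono)
  finally show ?thesis .
qed

lemma sum_hint_integral_le:
  fixes f G :: "nat \<Rightarrow> real \<Rightarrow> real"
  assumes Ms: "\<And>j. j < K \<Longrightarrow> Ms j = density lborel (\<lambda>x. ennreal (f j x))"
    and f: "\<And>j. j < K \<Longrightarrow> f j \<in> borel_measurable borel" "\<And>j x. j < K \<Longrightarrow> 0 \<le> f j x \<and> f j x \<le> D x"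
    and D: "integrable lborel D" "\<And>x. 0 \<le> D x" "integral\<^sup>L lborel D \<le> Z" "1 \<le> Z"
    and G: "\<And>j. j < K \<Longrightarrow> G j \<in> borel_measurable borel" "\<And>j x. 0 \<le> G j x" "\<And>x. (\<Sum>j<K. G j x) \<le> B"
  shows "(\<Sum>j<K. LINT x|hint_measure h (Ms j). G j x) \<le> Z * B"
proof (cases h)
  case OneSample
  then show ?thesis
    using sum_density_integral_le[OF f D(1-3) G] Ms by (simp add: hint_measure_def)
next
  case ValueRange
  have "(\<Sum>j<K. LINT x|hint_measure h (Ms j). G j x) = (\<Sum>j<K. G j 0)"
    using G(1) by (simp add: ValueRange hint_measure_def integral_return)
  also have "\<dots> \<le> 1 * B"
    using G(3) by simp
  also have "\<dots> \<le> Z * B"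
  proof (rule mult_right_mono)
    have "0 \<le> (\<Sum>j<K. G j 0)"
      using G(2) by (simp add: sum_nonneg)
    then show "0 \<le> B"
      using G(3)[of 0] by linarith
  qed (rule D(4))
  finally show ?thesis .
qed

lemma sum_succ_prob_le:
  fixes f :: "nat \<Rightarrow> real \<Rightarrow> real"
  assumes Ms: "\<And>j. j < K \<Longrightarrow> Ms j = density lborel (\<lambda>x. ennreal (f j x))" "\<And>j. j < K \<Longrightarrow> prob_space (Ms j)"
    and f: "\<And>j. j < K \<Longrightarrow> f j \<in> borel_measurable borel" "\<And>j x. j < K \<Longrightarrow> 0 \<le> f j x \<and> f j x \<le> D x"
    and D: "integrable lborel D" "\<And>x. 0 \<le> D x" "integral\<^sup>L lborel D \<le> Z" "1 \<le> Z"
    and alg: "randomized_algorithm R P Out"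
    and given: "\<And>r x. (\<Sum>j<K. succ_prob_given (Ms j) eps m (P r x) (Out r x)) \<le> B"
    and succ: "0 < s" "\<And>j. j < K \<Longrightarrow> s \<le> succ_prob (Ms j) h eps m R P Out"
  shows "K * s \<le> Z * B"
proof -
  interpret R: prob_space R
    using alg unfolding randomized_algorithm_def by blast
  define S where
    "S j r = (LINT x|hint_measure h (Ms j). succ_prob_given (Ms j) eps m (P r x) (Out r x))" for j r
  have succ_S: "succ_prob (Ms j) h eps m R P Out = (LINT r|R. S j r)" for j
    unfolding succ_prob_eq_integral_given S_def ..
  have sum_S: "(\<Sum>j<K. S j r) \<le> Z * B" for r
    unfolding S_def
  proof (rule sum_hint_integral_le[OF Ms(1) f D])
    show "(\<lambda>x. succ_prob_given (Ms j) eps m (P r x) (Out r x)) \<in> borel_measurable borel"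
      if "j < K" for j
      using Ms[OF that] randomized_algorithm_measurable_section[OF alg]
      by (intro borel_measurable_succ_prob_given) (auto simp: prob_space_def)
  qed (use succ_prob_given_nonneg given in auto)
  have integrable_S: "integrable R (S j)" if "j < K" for j
    using not_integrable_integral_eq[of R "S j"] succ succ_S that by fastforce
  have "K * s \<le> (\<Sum>j<K. succ_prob (Ms j) h eps m R P Out)"
    using succ(2) sum_mono[of "{..<K}" "\<lambda>_. s"] by simp
  also have "\<dots> = (LINT r|R. (\<Sum>j<K. S j r))"
    unfolding succ_S using integrable_S by simp
  also have "\<dots> \<le> Z * B"
    using integrable_S sum_S by (intro R.integral_le_const) auto
  finally show ?thesis .
qed

lemma sum_succ_prob_step_dists_le:
  fixes K :: nat and a d t e :: "nat \<Rightarrow> real" and a' d' t' e' s B :: real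
  assumes dists: "\<And>j. j < K \<Longrightarrow> step_distribution (a j) (d j) (t j) (e j)"
    and dom: "\<And>j x. j < K \<Longrightarrow> step_density (a j) (d j) (t j) (e j) x \<le> step_density a' d' t' e' x"
    and dom_params: "0 \<le> a'" "0 \<le> d'" "1 \<le> t'" "t' \<le> e'" "1 \<le> a' * (t' - 1) + d' * (e' - t')"
    and alg: "randomized_algorithm R P Out"
    and given: "\<And>r x.
      (\<Sum>j<K. succ_prob_given (step_dist (a j) (d j) (t j) (e j)) eps m (P r x) (Out r x)) \<le> B"
    and succ: "0 < s" "\<And>j. j < K \<Longrightarrow> s \<le> succ_prob (step_dist (a j) (d j) (t j) (e j)) h eps m R P Out"
  shows "K * s \<le> (a' * (t' - 1) + d' * (e' - t')) * B"
proof (rule sum_succ_prob_le[where Ms="\<lambda>j. step_dist (a j) (d j) (t j) (e j)"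
      and f="\<lambda>j. step_density (a j) (d j) (t j) (e j)" and D="step_density a' d' t' e'",
      OF _ _ _ _ _ _ _ _ alg given succ])
  fix j x assume "j < K"
  then interpret step_distribution "a j" "d j" "t j" "e j"
    by (rule dists)
  show "step_dist (a j) (d j) (t j) (e j) =
      density lborel (\<lambda>x. ennreal (step_density (a j) (d j) (t j) (e j) x))"
    unfolding step_dist_def ..
  show "prob_space (step_dist (a j) (d j) (t j) (e j))"
    by (rule prob_space)
  show "0 \<le> step_density (a j) (d j) (t j) (e j) x \<and>
      step_density (a j) (d j) (t j) (e j) x \<le> step_density a' d' t' e' x"
    using step_density_nonneg[OF a_nonneg d_nonneg] dom \<open>j < K\<close> by blast
qed (use dom_params in
    \<open>simp_all add: integrable_step_density integral_step_density step_density_nonneg\<close>)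

definition query_lower_bound :: "real \<Rightarrow> real measure set \<Rightarrow> real \<Rightarrow> bool" where
  "query_lower_bound eps Fam N \<longleftrightarrow> (\<forall>h m R P Out. randomized_algorithm R P Out \<and>
     (\<forall>M\<in>Fam. 2/15 \<le> succ_prob M h eps m R P Out) \<longrightarrow> N \<le> real m)"

lemma disjoint_family_on_sorted_intervals:
  fixes lo hi :: "nat \<Rightarrow> real"
  assumes "\<And>j. j < K \<Longrightarrow> lo j \<le> hi j" "\<And>j. Suc j < K \<Longrightarrow> hi j < lo (Suc j)"
  shows "disjoint_family_on (\<lambda>j. {lo j..hi j}) {..<K}"
proof -
  have hi_less_lo: "hi i < lo j" if "i < j" "j < K" for i j
    using that
  proof (induction j)
    case (Suc j)
    then have "hi i \<le> hi j"
      using assms(1)[of j] by (cases "i = j") auto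
    then show ?case
      using Suc.prems assms(2) by fastforce
  qed simp
  show ?thesis
    unfolding disjoint_family_on_def
  proof (intro ballI impI)
    fix i j assume "i \<in> {..<K}" "j \<in> {..<K}" "i \<noteq> j"
    then have "hi i < lo j \<or> hi j < lo i"
      using hi_less_lo by (auto simp: nat_neq_iff)
    then show "{lo i..hi i} \<inter> {lo j..hi j} = {}"
      by auto
  qed
qed

lemma sum_indicator_disjoint_le_1:
  fixes K :: nat
  assumes "disjoint_family_on I {..<K}" "\<And>j. j < K \<Longrightarrow> Good j \<Longrightarrow> p \<in> I j"
  shows "(\<Sum>j<K. if Good j then 1 else 0) \<le> (1::real)"
proof -
  have "(\<Sum>j<K. if Good j then 1 else 0) \<le> (\<Sum>j<K. indicator (I j) p :: real)"
    using assms(2) by (intro sum_mono) auto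
  also have "\<dots> \<le> 1"
  proof (cases "\<exists>j<K. p \<in> I j")
    case True
    then obtain j where "j < K" "p \<in> I j" by blast
    then show ?thesis
      using sum_indicator_disjoint_family[OF assms(1) \<open>p \<in> I j\<close> finite_lessThan,
          where f="\<lambda>_. 1 :: real"]
        \<open>j < K\<close> by simp
  qed auto
  finally show ?thesis .
qed

lemma succ_prob_given_0:
  "succ_prob_given M eps 0 Pq Oq = (if (1 - eps) * opt_rev M \<le> Rev M (Oq []) then 1 else 0)"
  unfolding succ_prob_given_def path_prob_def by (simp add: bool_lists_length_0)

section \<open>No query: uniform distributions\<close>

definition uniform_dist :: "real \<Rightarrow> real measure" where
  "uniform_dist t = step_dist 0 (25/12) t (t + 12/25)"

lemma step_distribution_uniform: "1 \<le> t \<Longrightarrow> step_distribution 0 (25/12) t (t + 12/25)"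
  by unfold_locales auto

lemma uniform_revenue_gap:
  fixes t u eps :: real
  assumes "1 \<le> t" "(1 - eps) * t \<le> (t + u) * (1 - 25/12 * u)"
  shows "u \<le> 12 * eps * t / (25 * t - 12)"
proof -
  have "u * (25 * t - 12) \<le> 12 * eps * t - 25 * u\<^sup>2"
    using assms(2) by (simp add: algebra_simps power2_eq_square)
  then have "u * (25 * t - 12) \<le> 12 * eps * t"
    by (smt (verit) zero_le_power2)
  then show ?thesis
    using assms(1) by (simp add: pos_le_divide_eq)
qed

lemma uniform_near_optimal_price:
  assumes "1 \<le> t" "0 < eps" "eps < 1" "(1 - eps) * opt_rev (uniform_dist t) \<le> Rev (uniform_dist t) p"
  shows "(1 - eps) * t \<le> p \<and> p \<le> t + 12 * eps * t / (25 * t - 12)"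
proof -
  interpret step_distribution 0 "25/12" t "t + 12/25"
    using step_distribution_uniform[OF assms(1)] .
  let ?q = "step_tail 0 (25/12) t (t + 12/25)"
  have good: "(1 - eps) * t \<le> p * ?q p"
    using near_optimal_price[of eps p t] assms tail_low[of t] unfolding uniform_dist_def by simp
  have bound_nonneg: "0 \<le> 12 * eps * t / (25 * t - 12)"
    using assms by simp
  consider "p \<le> t" | "t \<le> p" "p \<le> t + 12/25" | "t + 12/25 \<le> p"
    by linarith
  then show ?thesis
  proof cases
    case 1
    then have "?q p = 1"
      using tail_below[of p] tail_low[of p] by (cases "p \<le> 1") auto
    then show ?thesis
      using good 1 bound_nonneg by simp
  next
    case 2
    have "?q p = 1 - 25/12 * (p - t)"
      using tail_high[of p] 2 by (simp add: field_simps)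
    then have "p - t \<le> 12 * eps * t / (25 * t - 12)"
      using good assms(1) by (intro uniform_revenue_gap) auto
    moreover have "(1 - eps) * t \<le> t"
      using assms by simp
    ultimately show ?thesis
      using 2 by simp
  next
    case 3
    moreover have "0 < (1 - eps) * t"
      using assms by simp
    ultimately show ?thesis
      using good tail_above[of p] by simp
  qed
qed

text \<open>Chosen so that the intervals of \<open>uniform_near_optimal_price\<close> are disjoint for every
  \<open>eps < 1/64\<close>, while all supports stay inside \<open>[1, 2]\<close>.\<close>
definition uniform_start :: "nat \<Rightarrow> real" where
  "uniform_start j = [1, 1031/1000, 531/500, 1093/1000, 281/250, 289/250, 297/250, 61/50, 313/250,
     257/200, 659/500, 1351/1000, 277/200, 1419/1000, 727/500, 1489/1000] ! j"

lemma uniform_start_bounds: "j < 16 \<Longrightarrow> 1 \<le> uniform_start j \<and> uniform_start j \<le> 1489/1000"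
  by (simp add: less_Suc_eq numeral_eq_Suc uniform_start_def, elim disjE) simp_all

lemma uniform_start_separated:
  assumes "Suc j < 16" "0 < eps" "eps < 1/64"
  shows "uniform_start j + 12 * eps * uniform_start j / (25 * uniform_start j - 12)
    < (1 - eps) * uniform_start (Suc j)"
  using assms(1) by (simp add: less_Suc_eq numeral_eq_Suc, elim disjE)
    (use assms(2,3) in \<open>simp_all add: uniform_start_def\<close>)

lemma sum_succ_prob_given_uniform_le_1:
  assumes "0 < eps" "eps < 1/64"
  shows "(\<Sum>j<16. succ_prob_given (uniform_dist (uniform_start j)) eps 0 Pq Oq) \<le> 1"
proof -
  let ?lo = "\<lambda>j. (1 - eps) * uniform_start j"
    and ?hi = "\<lambda>j. uniform_start j + 12 * eps * uniform_start j / (25 * uniform_start j - 12)"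
  have "?lo j \<le> ?hi j" if "j < 16" for j
  proof -
    have "1 \<le> uniform_start j" using uniform_start_bounds[OF that] by simp
    then show ?thesis using assms by (auto intro: order_trans[of _ "uniform_start j"])
  qed
  then have "disjoint_family_on (\<lambda>j. {?lo j..?hi j}) {..<16}"
    using uniform_start_separated[OF _ assms] by (rule disjoint_family_on_sorted_intervals)
  then show ?thesis
    unfolding succ_prob_given_0
  proof (rule sum_indicator_disjoint_le_1)
    fix j :: nat
    assume "j < 16"
      and "(1 - eps) * opt_rev (uniform_dist (uniform_start j))
        \<le> Rev (uniform_dist (uniform_start j)) (Oq [])"
    then show "Oq [] \<in> {?lo j..?hi j}"
      using uniform_near_optimal_price[of "uniform_start j" eps "Oq []"] uniform_start_bounds assms
      by simp
  qed
qed

definition uniform_family :: "real measure set" where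
  "uniform_family = (\<lambda>j. uniform_dist (uniform_start j)) ` {..<16}"

lemma MHR_family_on_1_2_uniform: "MHR_family_on_1_2 uniform_family"
  unfolding uniform_family_def uniform_dist_def
proof (intro MHR_family_on_1_2_step_dists)
  fix j :: nat
  assume "j < 16"
  then show "step_distribution 0 (25/12) (uniform_start j) (uniform_start j + 12/25) \<and>
      uniform_start j + 12/25 \<le> 2"
    using step_distribution_uniform uniform_start_bounds[of j] by auto
qed simp

lemma query_lower_bound_uniform:
  assumes "0 < eps" "eps < 1/64"
  shows "query_lower_bound eps uniform_family 1"
  unfolding query_lower_bound_def uniform_family_def
proof (intro allI impI, elim conjE)
  fix h m R P Out
  assume alg: "randomized_algorithm R P Out"
    and succ: "\<forall>M\<in>(\<lambda>j. uniform_dist (uniform_start j)) ` {..<16}. 2/15 \<le> succ_prob M h eps m R P Out"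
  show "1 \<le> real m"
  proof (rule ccontr)
    assume "\<not> 1 \<le> real m"
    then have "m = 0" by simp
    \<comment> \<open>all sixteen densities lie below one of mass \<open>2.02 < 16 \<cdot> 2/15\<close>\<close>
    have "real 16 * (2/15) \<le> (0 * (1 - 1) + 25/12 * (1969/1000 - 1)) * 1"
    proof (rule sum_succ_prob_step_dists_le[where a="\<lambda>_. 0" and d="\<lambda>_. 25/12" and t=uniform_start
          and e="\<lambda>j. uniform_start j + 12/25", OF _ _ _ _ _ _ _ alg])
      fix j :: nat and y :: real
      assume j: "j < 16"
      then show "step_distribution 0 (25/12) (uniform_start j) (uniform_start j + 12/25)"
        using step_distribution_uniform uniform_start_bounds by simp
      show "step_density 0 (25/12) (uniform_start j) (uniform_start j + 12/25) y
          \<le> step_density 0 (25/12) 1 (1969/1000) y"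
        using uniform_start_bounds[OF j] by (intro step_density_le) auto
      show "2/15 \<le>
          succ_prob (step_dist 0 (25/12) (uniform_start j) (uniform_start j + 12/25)) h eps m R P Out"
        using succ j unfolding uniform_dist_def by blast
    next
      show "(\<Sum>j<16. succ_prob_given (step_dist 0 (25/12) (uniform_start j) (uniform_start j + 12/25))
          eps m (P r x) (Out r x)) \<le> 1" for r x
        using sum_succ_prob_given_uniform_le_1[OF assms] unfolding \<open>m = 0\<close> uniform_dist_def .
    qed simp_all
    then show False
      by simp
  qed
qed

section \<open>Few queries: two-step distributions\<close>

definition two_step_height :: "real \<Rightarrow> real" where
  "two_step_height t = (5 - t) / (4 * (2 - t))"

definition two_step_dist :: "real \<Rightarrow> real measure" where
  "two_step_dist t = step_dist (1/4) (two_step_height t) t 2"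

abbreviation two_step_tail :: "real \<Rightarrow> real \<Rightarrow> real" where
  "two_step_tail t \<equiv> step_tail (1/4) (two_step_height t) t 2"

lemma two_step_height_3_2: "two_step_height (3/2) = 7/4"
  unfolding two_step_height_def by simp

lemma two_step_height_mono: "s \<le> t \<Longrightarrow> t < 2 \<Longrightarrow> two_step_height s \<le> two_step_height t"
  unfolding two_step_height_def by (simp add: divide_simps) (simp add: algebra_simps)

lemma step_distribution_two_step:
  assumes "3/2 \<le> t" "t < 2"
  shows "step_distribution (1/4) (two_step_height t) t 2"
proof
  show "1/4 \<le> two_step_height t"
    using two_step_height_mono[OF assms] by (simp add: two_step_height_3_2)
  show "1/4 * (t - 1) + two_step_height t * (2 - t) = 1"
    using assms unfolding two_step_height_def by (simp add: field_simps)
qed (use assms in auto)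

lemma two_step_height_bounds:
  assumes "3/2 \<le> t" "t \<le> 3/2 + 36 * eps" "eps < 1/2000"
  shows "7/4 \<le> two_step_height t \<and> two_step_height t \<le> 7/4 + 120 * eps"
proof -
  have t: "9/20 \<le> 2 - t" "0 \<le> eps"
    using assms by auto
  have "3/2 * (t - 3/2) \<le> 120 * eps * (9/20)"
    using assms(2) by simp
  also have "\<dots> \<le> 120 * eps * (2 - t)"
    using t by (intro mult_left_mono) auto
  finally have "3/2 * (t - 3/2) / (2 - t) \<le> 120 * eps"
    using t by (simp add: pos_divide_le_eq algebra_simps)
  moreover have "two_step_height t - 7/4 = 3/2 * (t - 3/2) / (2 - t)"
    using t unfolding two_step_height_def by (simp add: field_simps)
  ultimately show ?thesis
    using two_step_height_mono[of "3/2" t] assms(1) t by (simp add: two_step_height_3_2)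
qed

lemma two_step_tail_low: "3/2 \<le> t \<Longrightarrow> t < 2 \<Longrightarrow> 1 \<le> p \<Longrightarrow> p \<le> t \<Longrightarrow> two_step_tail t p = (5 - p) / 4"
  using step_distribution.tail_low[OF step_distribution_two_step] by (simp add: field_simps)

lemma two_step_tail_high:
  "3/2 \<le> t \<Longrightarrow> t < 2 \<Longrightarrow> t \<le> p \<Longrightarrow> p \<le> 2 \<Longrightarrow> two_step_tail t p = two_step_height t * (2 - p)"
  using step_distribution.tail_high[OF step_distribution_two_step] by simp

lemma two_step_peak_revenue_gt_1:
  fixes t eps :: real
  assumes "3/2 \<le> t" "t \<le> 152/100" "eps < 1/2000"
  shows "1 < (1 - eps) * (t * ((5 - t) / 4))"
proof -
  have "t * (5 - t) - 21/4 = (t - 3/2) * (7/2 - t)"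
    by (simp add: algebra_simps)
  moreover have "0 \<le> (t - 3/2) * (7/2 - t)"
    using assms(1,2) by simp
  ultimately have "21/4 \<le> t * (5 - t)"
    by linarith
  then have "4/5 * (21/16) \<le> (1 - eps) * (t * ((5 - t) / 4))"
    using assms(3) by (intro mult_mono) auto
  then show ?thesis
    by simp
qed

lemma revenue_gap_below:
  fixes t p eps :: real
  assumes "3/2 \<le> t" "t \<le> 152/100" "0 \<le> eps" "p \<le> t" "(1 - eps) * (t * (5 - t)) \<le> p * (5 - p)"
  shows "t - 14/5 * eps \<le> p"
proof -
  have "(t - p) * (5 - 2 * t) \<le> (t - p) * (5 - t - p)"
    using assms(4) by (intro mult_left_mono) auto
  also have "\<dots> \<le> eps * (t * (5 - t))"
    using assms(5) by (simp add: algebra_simps)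
  also have "\<dots> \<le> eps * (14/5 * (5 - 2 * t))"
  proof -
    have "14/5 * (5 - 2 * t) - t * (5 - t) = (152/100 - t) * (53/5 - 152/100 - t) + 124/625"
      by (simp add: field_simps)
    also have "\<dots> \<ge> 0"
      using assms(2) by simp
    finally show ?thesis
      using assms(3) by (intro mult_left_mono) auto
  qed
  finally have "(t - p) * (5 - 2 * t) \<le> (14/5 * eps) * (5 - 2 * t)"
    by (simp add: algebra_simps)
  then show ?thesis
    using assms(2) by (simp add: mult_le_cancel_right)
qed

lemma revenue_gap_above:
  fixes t p eps :: real
  assumes "3/2 \<le> t" "0 \<le> eps" "t \<le> p" "(1 - eps) * (t * (2 - t)) \<le> p * (2 - p)"
  shows "p \<le> t + eps"
proof -
  have "p - t \<le> (p - t) * (p + t - 2)"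
    using assms(1,3) by (simp add: mult_le_cancel_left1)
  also have "\<dots> \<le> eps * (t * (2 - t))"
    using assms(4) by (simp add: algebra_simps)
  also have "\<dots> \<le> eps * 1"
  proof -
    have "1 - t * (2 - t) = (t - 1)\<^sup>2"
      by (simp add: algebra_simps power2_eq_square)
    then show ?thesis
      using assms(2) by (intro mult_left_mono) (auto simp: algebra_simps)
  qed
  finally show ?thesis by simp
qed

lemma two_step_near_optimal_price:
  assumes "3/2 \<le> t" "t \<le> 152/100" "0 < eps" "eps < 1/2000"
    and "(1 - eps) * opt_rev (two_step_dist t) \<le> Rev (two_step_dist t) p"
  shows "t - 14/5 * eps \<le> p \<and> p \<le> t + eps"
proof -
  have t: "3/2 \<le> t" "t < 2"
    using assms(1,2) by auto
  interpret step_distribution "1/4" "two_step_height t" t 2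
    using step_distribution_two_step[OF t] .
  have good: "(1 - eps) * (t * ((5 - t) / 4)) \<le> p * two_step_tail t p"
    using near_optimal_price[of eps p t] two_step_tail_low[OF t, of t] assms
    unfolding two_step_dist_def by simp
  have peak: "1 < (1 - eps) * (t * ((5 - t) / 4))"
    using two_step_peak_revenue_gt_1 assms by simp
  consider "p \<le> 1" | "1 \<le> p" "p \<le> t" | "t \<le> p" "p \<le> 2" | "2 \<le> p"
    by linarith
  then show ?thesis
  proof cases
    case 1
    then show ?thesis
      using good peak tail_below[of p] by simp
  next
    case 2
    then have "(1 - eps) * (t * (5 - t)) \<le> p * (5 - p)"
      using good two_step_tail_low[OF t, of p] by simp
    then show ?thesis
      using revenue_gap_below[of t eps p] 2 assms by simp
  next
    case 3
    have "(5 - t) / 4 = two_step_height t * (2 - t)"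
      using two_step_tail_low[OF t, of t] two_step_tail_high[OF t, of t] t by simp
    then have "(1 - eps) * (t * (two_step_height t * (2 - t))) \<le> p * (two_step_height t * (2 - p))"
      using good two_step_tail_high[OF t, of p] 3 by simp
    then have "two_step_height t * ((1 - eps) * (t * (2 - t))) \<le> two_step_height t * (p * (2 - p))"
      by (simp add: algebra_simps)
    moreover have "0 < two_step_height t"
      using t unfolding two_step_height_def by simp
    ultimately have "(1 - eps) * (t * (2 - t)) \<le> p * (2 - p)"
      by simp
    then show ?thesis
      using revenue_gap_above[of t eps p] 3 assms by simp
  next
    case 4
    then show ?thesis
      using good peak tail_above[of p] by simp
  qed
qed

lemma two_step_tail_gap:
  assumes "3/2 \<le> t" "t \<le> 3/2 + 36 * eps" "0 < eps" "eps < 1/2000" "3/2 \<le> p" "p \<le> 2"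
  shows "0 \<le> two_step_tail t p - two_step_tail (3/2) p \<and>
    two_step_tail t p - two_step_tail (3/2) p \<le> 120 * eps * (2 - p)"
proof -
  have t: "3/2 \<le> t" "t < 2" "9/20 \<le> 2 - t"
    using assms(1,2,4) by auto
  have b: "two_step_tail (3/2) p = 7/4 * (2 - p)"
    using two_step_tail_high[of "3/2" p] assms(5,6) by (simp add: two_step_height_3_2)
  show ?thesis
  proof (cases "p \<le> t")
    case True
    then have "two_step_tail t p - two_step_tail (3/2) p = 3/2 * (p - 3/2)"
      using two_step_tail_low[OF t(1,2), of p] assms(5) b by (simp add: field_simps)
    moreover have "3/2 * (p - 3/2) \<le> 120 * eps * (9/20)"
      using True assms(2) by simp
    moreover have "120 * eps * (9/20) \<le> 120 * eps * (2 - p)"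
      using True t assms(3) by (intro mult_left_mono) auto
    ultimately show ?thesis
      using assms(5) by simp
  next
    case False
    then have "two_step_tail t p = two_step_height t * (2 - p)"
      using two_step_tail_high[OF t(1,2), of p] assms(6) by simp
    then have "two_step_tail t p - two_step_tail (3/2) p = (two_step_height t - 7/4) * (2 - p)"
      unfolding b by (simp add: algebra_simps)
    then show ?thesis
      using two_step_height_bounds[OF assms(1,2,4)] assms(6) by (simp add: mult_right_mono)
  qed
qed

lemma two_step_tail_chi2_le:
  assumes "3/2 \<le> t" "t \<le> 3/2 + 36 * eps" "0 < eps" "eps < 1/2000" "3/2 \<le> p" "p < 2"
  shows "0 < two_step_tail (3/2) p \<and> two_step_tail (3/2) p < 1 \<and>
    chi2_bernoulli (two_step_tail t p) (two_step_tail (3/2) p) \<le> 34000 * eps\<^sup>2"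
proof -
  let ?a = "two_step_tail t p" and ?b = "two_step_tail (3/2) p"
  have b: "?b = 7/4 * (2 - p)"
    using two_step_tail_high[of "3/2" p] assms(5,6) by (simp add: two_step_height_3_2)
  have gap: "0 \<le> ?a - ?b" "?a - ?b \<le> 120 * eps * (2 - p)"
    using two_step_tail_gap[OF assms(1-5)] assms(6) by auto
  have "(?a - ?b)\<^sup>2 \<le> (120 * eps * (2 - p))\<^sup>2"
    using gap by (intro power_mono) auto
  also have "\<dots> = 14400 * eps\<^sup>2 * ((2 - p) * (2 - p))"
    by (simp add: power2_eq_square)
  also have "\<dots> \<le> 14400 * eps\<^sup>2 * ((2 - p) * (1/2))"
    using assms(5,6) by (intro mult_left_mono) auto
  also have "\<dots> = 7200 * (eps\<^sup>2 * (2 - p))"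
    by simp
  also have "\<dots> \<le> 59500/8 * (eps\<^sup>2 * (2 - p))"
    using assms(6) by (intro mult_right_mono) auto
  also have "\<dots> = 34000 * eps\<^sup>2 * (7/4 * (2 - p) * (1/8))"
    by simp
  also have "\<dots> \<le> 34000 * eps\<^sup>2 * (?b * (1 - ?b))"
    unfolding b using assms(5,6) by (intro mult_left_mono) auto
  finally have "(?a - ?b)\<^sup>2 \<le> 34000 * eps\<^sup>2 * (?b * (1 - ?b))" .
  moreover have "0 < ?b" "?b < 1"
    unfolding b using assms(5,6) by auto
  ultimately show ?thesis
    by (simp add: chi2_bernoulli_eq divide_le_eq)
qed

lemma chi2_close_two_step:
  assumes "3/2 \<le> t" "t \<le> 3/2 + 36 * eps" "0 < eps" "eps < 1/2000"
  shows "chi2_close (two_step_tail t) (two_step_tail (3/2)) (34000 * eps\<^sup>2)"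
  unfolding chi2_close_def
proof (intro allI conjI impI)
  interpret A: step_distribution "1/4" "two_step_height t" t 2
    using step_distribution_two_step assms by simp
  interpret B: step_distribution "1/4" "two_step_height (3/2)" "3/2" 2
    using step_distribution_two_step by simp
  fix p
  show "0 \<le> two_step_tail t p" "two_step_tail t p \<le> 1"
    "0 \<le> two_step_tail (3/2) p" "two_step_tail (3/2) p \<le> 1"
    using A.tail_bounds B.tail_bounds by auto
  consider "p \<le> 1" | "1 \<le> p" "p \<le> 3/2" | "3/2 \<le> p" "p < 2" | "2 \<le> p"
    by linarith
  then have "two_step_tail t p = two_step_tail (3/2) p \<or> (3/2 \<le> p \<and> p < 2)"
    by cases
      (use A.tail_below B.tail_below A.tail_low B.tail_low A.tail_above B.tail_above assms in auto)
  then show "two_step_tail (3/2) p = 0 \<Longrightarrow> two_step_tail t p = 0"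
    "two_step_tail (3/2) p = 1 \<Longrightarrow> two_step_tail t p = 1"
    "chi2_bernoulli (two_step_tail t p) (two_step_tail (3/2) p) \<le> 34000 * eps\<^sup>2"
    using two_step_tail_chi2_le[OF assms, of p] by (auto simp: chi2_bernoulli_self)
qed

definition two_step_point :: "real \<Rightarrow> nat \<Rightarrow> real" where
  "two_step_point eps j = 3/2 + 4 * real j * eps"

lemma two_step_point_bounds:
  assumes "j < 10" "0 < eps"
  shows "3/2 \<le> two_step_point eps j \<and> two_step_point eps j \<le> 3/2 + 36 * eps"
  using assms mult_right_mono[of "real j" 9 eps] unfolding two_step_point_def by simp

lemma sum_succ_prob_given_two_step_le:
  assumes "0 < eps" "eps < 1/2000" "0 < l"
  shows "(\<Sum>j<10. succ_prob_given (two_step_dist (two_step_point eps j)) eps m Pq Oq)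
    \<le> 1 + 10 * (((1 + 34000 * eps\<^sup>2) ^ m - 1) / (2 * l) + l / 2)"
proof -
  let ?t = "two_step_point eps" and ?M = "\<lambda>j. two_step_dist (two_step_point eps j)"
  define g where
    "g j bs = (if (1 - eps) * opt_rev (?M j) \<le> Rev (?M j) (Oq bs) then 1 else 0 :: real)" for j bs
  have t: "3/2 \<le> ?t j" "?t j \<le> 3/2 + 36 * eps" if "j < 10" for j
    using two_step_point_bounds[OF that assms(1)] by auto
  have "succ_prob_given (?M j) eps m Pq Oq =
      (\<Sum>bs | length bs = m. answer_prob (two_step_tail (?t j)) Pq bs * g j bs)"
    if "j < 10" for j
  proof -
    interpret step_distribution "1/4" "two_step_height (?t j)" "?t j" 2
      using step_distribution_two_step t[OF that] assms(2) by simp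
    show ?thesis
      unfolding succ_prob_given_def g_def two_step_dist_def sellq
        path_prob_eq_answer_prob[OF prob_space sets_step_dist] ..
  qed
  then have "(\<Sum>j<10. succ_prob_given (?M j) eps m Pq Oq)
      = (\<Sum>j<10. \<Sum>bs | length bs = m. answer_prob (two_step_tail (?t j)) Pq bs * g j bs)"
    by simp
  also have "\<dots> \<le> 1 + real 10 * (((1 + 34000 * eps\<^sup>2) ^ m - 1) / (2 * l) + l / 2)"
  proof (rule sum_answer_prob_disjoint_success_le)
    show "chi2_close (two_step_tail (?t j)) (two_step_tail (3/2)) (34000 * eps\<^sup>2)" if "j < 10" for j
      using chi2_close_two_step t[OF that] assms by simp
    show "0 \<le> two_step_tail (3/2) p \<and> two_step_tail (3/2) p \<le> 1" for p
      using step_distribution.tail_bounds[OF step_distribution_two_step[of "3/2"]] by simp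
    show "(\<Sum>j<10. g j bs) \<le> 1" for bs
      unfolding g_def
    proof (rule sum_indicator_disjoint_le_1)
      show "disjoint_family_on (\<lambda>j. {?t j - 14/5 * eps..?t j + eps}) {..<10}"
        using assms(1) by (intro disjoint_family_on_sorted_intervals)
          (simp_all add: two_step_point_def algebra_simps)
      show "Oq bs \<in> {?t j - 14/5 * eps..?t j + eps}"
        if "j < 10" "(1 - eps) * opt_rev (?M j) \<le> Rev (?M j) (Oq bs)" for j
        using two_step_near_optimal_price[of "?t j" eps "Oq bs"] t[OF that(1)] that(2) assms by simp
    qed
  qed (use assms in \<open>auto simp: g_def\<close>)
  finally show ?thesis by simp
qed

lemma one_plus_power_le:
  fixes x :: real
  assumes "0 \<le> x" "real m * x \<le> 1/2"
  shows "(1 + x) ^ m \<le> 1 + 2 * (real m * x)"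
proof -
  have "(1 + x) ^ m \<le> exp x ^ m"
    using assms(1) by (intro power_mono) (auto simp: exp_ge_add_one_self)
  also have "\<dots> = exp (real m * x)"
    by (simp add: exp_of_nat_mult)
  also have "\<dots> \<le> 1 + 2 * (real m * x)"
    using real_exp_bound_lemma[of "real m * x"] assms by simp
  finally show ?thesis .
qed

lemma change_of_measure_error_bounds:
  fixes chi :: real and m :: nat
  defines "B \<equiv> 1 + 10 * (((1 + chi) ^ m - 1) / (2 * (1/50)) + 1/50 / 2)"
  assumes "0 \<le> chi" "real m * chi \<le> 17/100000"
  shows "0 \<le> B" "B \<le> 12/10"
proof -
  have "1 \<le> (1 + chi) ^ m"
    using assms(2) by (intro one_le_power) simp
  then have "0 \<le> ((1 + chi) ^ m - 1) / (2 * (1/50))"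
    by simp
  then show "0 \<le> B"
    unfolding B_def by (intro add_nonneg_nonneg mult_nonneg_nonneg) simp_all
  show "B \<le> 12/10"
    using one_plus_power_le[of chi m] assms(2,3) unfolding B_def by simp
qed

definition two_step_family :: "real \<Rightarrow> real measure set" where
  "two_step_family eps = (\<lambda>j. two_step_dist (two_step_point eps j)) ` {..<10}"

lemma MHR_family_on_1_2_two_step:
  assumes "0 < eps" "eps < 1/2000"
  shows "MHR_family_on_1_2 (two_step_family eps)"
  unfolding two_step_family_def two_step_dist_def
  using step_distribution_two_step two_step_point_bounds assms
  by (intro MHR_family_on_1_2_step_dists) force+

lemma query_lower_bound_two_step:
  assumes "0 < eps" "eps < 1/2000"
  shows "query_lower_bound eps (two_step_family eps) (1 / (2 * 10^8) / eps\<^sup>2)"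
  unfolding query_lower_bound_def two_step_family_def
proof (intro allI impI, elim conjE)
  fix h m R P Out
  assume alg: "randomized_algorithm R P Out"
    and succ: "\<forall>M\<in>(\<lambda>j. two_step_dist (two_step_point eps j)) ` {..<10}.
      2/15 \<le> succ_prob M h eps m R P Out"
  let ?t = "two_step_point eps" and ?chi = "34000 * eps\<^sup>2" and ?l = "1/50 :: real"
    and ?H = "two_step_height (3/2 + 36 * eps)"
  define B where "B = 1 + 10 * (((1 + ?chi) ^ m - 1) / (2 * ?l) + ?l / 2)"
  have t: "3/2 \<le> ?t j" "?t j \<le> 3/2 + 36 * eps" "?t j < 2" if "j < 10" for j
    using two_step_point_bounds[OF that assms(1)] assms(2) by auto
  have H: "7/4 \<le> ?H" "?H \<le> 181/100"
    using two_step_height_bounds[of "3/2 + 36 * eps" eps] assms by auto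
  show "1 / (2 * 10^8) / eps\<^sup>2 \<le> real m"
  proof (rule ccontr)
    assume "\<not> ?thesis"
    then have "real m * ?chi \<le> 17/100000"
      using assms(1) by (simp add: divide_le_eq mult.commute)
    then have B: "0 \<le> B" "B \<le> 12/10"
      using change_of_measure_error_bounds[of ?chi m] unfolding B_def by simp_all
    \<comment> \<open>all ten densities lie below one of mass \<open>1/8 + ?H/2 \<le> 1.03\<close>\<close>
    have "real 10 * (2/15) \<le> (1/4 * (3/2 - 1) + ?H * (2 - 3/2)) * B"
    proof (rule sum_succ_prob_step_dists_le[where a="\<lambda>_. 1/4" and d="\<lambda>j. two_step_height (?t j)"
          and t="?t" and e="\<lambda>_. 2", OF _ _ _ _ _ _ _ alg])
      fix j :: nat and y :: real
      assume j: "j < 10"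
      show "step_distribution (1/4) (two_step_height (?t j)) (?t j) 2"
        using step_distribution_two_step t[OF j] by simp
      have "two_step_height (?t j) \<le> ?H"
        using two_step_height_mono t[OF j] assms(2) by simp
      then show
        "step_density (1/4) (two_step_height (?t j)) (?t j) 2 y \<le> step_density (1/4) ?H (3/2) 2 y"
        using t[OF j] two_step_height_bounds[of "?t j" eps] H assms(2)
        by (intro step_density_le) auto
      show "2/15 \<le> succ_prob (step_dist (1/4) (two_step_height (?t j)) (?t j) 2) h eps m R P Out"
        using succ j unfolding two_step_dist_def by blast
    next
      show "(\<Sum>j<10. succ_prob_given (step_dist (1/4) (two_step_height (?t j)) (?t j) 2)
          eps m (P r x) (Out r x)) \<le> B" for r x
        using sum_succ_prob_given_two_step_le[OF assms, of ?l]
        unfolding B_def two_step_dist_def by simp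
    qed (use H in auto)
    also have "\<dots> \<le> 103/100 * (12/10)"
      using H B by (intro mult_mono) auto
    finally show False
      by simp
  qed
qed

lemma exists_hard_family:
  assumes "0 < eps" "eps < 1/64"
  shows "\<exists>Fam. MHR_family_on_1_2 Fam \<and> query_lower_bound eps Fam (1 / (2 * 10^8) / eps\<^sup>2)"
proof (cases "eps < 1/2000")
  case True
  then show ?thesis
    using MHR_family_on_1_2_two_step query_lower_bound_two_step assms by blast
next
  case False
  then have "1/2000 * (1/2000) \<le> eps * eps"
    by (intro mult_mono) auto
  then have "1 / (2 * 10^8) / eps\<^sup>2 \<le> 1"
    using assms by (simp add: divide_le_eq power2_eq_square)
  then have "query_lower_bound eps uniform_family (1 / (2 * 10^8) / eps\<^sup>2)"
    using query_lower_bound_uniform assms unfolding query_lower_bound_def by (meson order_trans)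
  then show ?thesis
    using MHR_family_on_1_2_uniform by blast
qed

theorem theorem5p3:
  shows "\<exists>c>0. \<forall>eps. 0 < eps \<and> eps < 1/64 \<longrightarrow>
    (\<exists>Fam :: real measure set. Fam \<noteq> {} \<and>
      (\<forall>M\<in>Fam. prob_space M \<and> sets M = sets borel \<and> MHR M \<and> measure M {1..2} = 1) \<and>
      (\<forall>h m (R :: real measure) P Out.
         prob_space R \<and> sets R = sets borel \<and>
         (\<forall>bs. (\<lambda>(r, x). P r x bs) \<in> borel_measurable (borel \<Otimes>\<^sub>M borel)) \<and>
         (\<forall>bs. (\<lambda>(r, x). Out r x bs) \<in> borel_measurable (borel \<Otimes>\<^sub>M borel)) \<and>
         (\<forall>M\<in>Fam. succ_prob M h eps m R P Out \<ge> 2/15)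
         \<longrightarrow> real m \<ge> c / eps\<^sup>2))"
  using exists_hard_family
  unfolding MHR_family_on_1_2_def query_lower_bound_def randomized_algorithm_def conj_assoc
  by (intro exI[of _ "1 / (2 * 10^8)"]) auto

end
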